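(* Let $X_1,\dots,X_n$ be independent with $X_i\sim\mathrm{Bernoulli}(p_i)$, $\lambda=\sum_{i=1}^np_i$, and let $\alpha_1,\dots,\alpha_n$ be i.i.d., independent of the $X_i$, with $\Pr(\alpha_i=1)=\Pr(\alpha_i=2)=1/2$. Let $S_n=\sum_{i=1}^n\alpha_iX_i$. Then $$D\big(P_{S_n}\,\|\,\mathrm{Po}(\lambda/2,\lambda/2)\big)\le\sum_{i=1}^np_i^2.$$
   Context: $\mathrm{Po}(\lambda/2,\lambda/2)$ denotes the compound Poisson distribution of $Z_1+2Z_2$, where $Z_1,Z_2$ are i.i.d. Poisson with mean $\lambda/2$. $D(P\|Q)=\sum_xP(x)\log\frac{P(x)}{Q(x)}$ is relative entropy with natural logarithm. *)

theory Defs
  imports "HOL-Probability.Probability"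
begin

definition po_pmf :: "real \<Rightarrow> nat pmf" where
  "po_pmf r = (if r > 0 then poisson_pmf r else return_pmf 0)"

text \<open>Compound Poisson Po(a,b): law of Z1 + 2 Z2 with Z1 ~ Po(a), Z2 ~ Po(b) independent.\<close>
definition cpo_pmf :: "real \<Rightarrow> real \<Rightarrow> nat pmf" where
  "cpo_pmf a b = map_pmf (\<lambda>(z1, z2). z1 + 2 * z2) (pair_pmf (po_pmf a) (po_pmf b))"

definition rel_entropy :: "'a pmf \<Rightarrow> 'a pmf \<Rightarrow> ereal" where
  "rel_entropy P Q =
     (if set_pmf P \<subseteq> set_pmf Q
      then ereal (\<Sum>\<^sub>\<infinity>x\<in>set_pmf P. pmf P x * ln (pmf P x / pmf Q x))
      else \<infinity>)"

definition S_pmf :: "nat \<Rightarrow> (nat \<Rightarrow> real) \<Rightarrow> nat pmf" where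
  "S_pmf n p = map_pmf (\<lambda>(X, \<alpha>). \<Sum>i<n. \<alpha> i * (if X i then 1 else 0))
     (pair_pmf (Pi_pmf {..<n} False (\<lambda>i. bernoulli_pmf (p i)))
               (Pi_pmf {..<n} 1 (\<lambda>i. pmf_of_set {1, 2})))"

end

theory Submission
  imports Defs
begin

text \<open>The summands \<open>Y\<^sub>i = \<alpha>\<^sub>i X\<^sub>i\<close> of \<open>S\<^sub>n\<close> are independent and
  \<open>Po(\<lambda>/2, \<lambda>/2)\<close> is the convolution of the laws \<open>Po(p\<^sub>i/2, p\<^sub>i/2)\<close>.
  Relative entropy is additive on product measures and, by the log-sum inequality, cannot
  increase under the map \<open>(x, y) \<mapsto> x + y\<close>; hence it is subadditive under convolution and
  it suffices to show \<open>D(Y\<^sub>i \<parallel> Po(p\<^sub>i/2, p\<^sub>i/2)) \<le> p\<^sub>i\<^sup>2\<close>.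
  Bounding \<open>Po(q/2, q/2)\<close> from below by \<open>e\<^sup>-\<^sup>q\<close> at 0 and by \<open>(q/2) e\<^sup>-\<^sup>q\<close>
  at 1 and 2 gives \<open>D(Y \<parallel> Po(q/2, q/2)) \<le> (1 - q) ln ((1 - q) e\<^sup>q) + q\<^sup>2 \<le> q\<^sup>2\<close>.\<close>

definition conv_pmf :: "'a::plus pmf \<Rightarrow> 'a pmf \<Rightarrow> 'a pmf" where
  "conv_pmf A B = map_pmf (\<lambda>(x, y). x + y) (pair_pmf A B)"

lemma set_conv_pmf: "set_pmf (conv_pmf A B) = (\<lambda>(x, y). x + y) ` (set_pmf A \<times> set_pmf B)"
  by (simp add: conv_pmf_def)

lemma conv_pmf_bind:
  "conv_pmf A B = bind_pmf A (\<lambda>x. bind_pmf B (\<lambda>y. return_pmf (x + y)))"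
  by (simp add: conv_pmf_def pair_pmf_def map_pmf_def bind_assoc_pmf bind_return_pmf)

lemma conv_pmf_conv_pmf_swap:
  fixes A B C D :: "'a::ab_semigroup_add pmf"
  shows "conv_pmf (conv_pmf A B) (conv_pmf C D) = conv_pmf (conv_pmf A C) (conv_pmf B D)"
  by (simp add: conv_pmf_bind bind_assoc_pmf bind_return_pmf bind_commute_pmf[of B C] add_ac)

lemma conv_pmf_map_pmf_additive:
  assumes "\<And>x y. f (x + y) = f x + f y"
  shows "conv_pmf (map_pmf f A) (map_pmf f B) = map_pmf f (conv_pmf A B)"
  by (simp add: conv_pmf_bind map_pmf_def bind_assoc_pmf bind_return_pmf assms)

lemma pmf_conv_pmf_nat:
  fixes A B :: "nat pmf"
  shows "pmf (conv_pmf A B) k = (\<Sum>i\<le>k. pmf A i * pmf B (k - i))"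
proof -
  have fiber: "(\<lambda>(x, y). x + y) -` {k} = (\<lambda>i. (i, k - i)) ` {..k}"
    by (force simp: image_iff)
  have "pmf (conv_pmf A B) k = measure (pair_pmf A B) ((\<lambda>i. (i, k - i)) ` {..k})"
    by (simp add: conv_pmf_def pmf_map fiber)
  also have "\<dots> = (\<Sum>i\<le>k. pmf A i * pmf B (k - i))"
    by (simp add: measure_measure_pmf_finite sum.reindex inj_on_def pmf_pair)
  finally show ?thesis .
qed

definition kl_sum :: "'a pmf \<Rightarrow> 'a pmf \<Rightarrow> real" where
  "kl_sum P Q = (\<Sum>x\<in>set_pmf P. pmf P x * ln (pmf P x / pmf Q x))"

lemma rel_entropy_eq_kl_sum:
  "finite (set_pmf P) \<Longrightarrow> set_pmf P \<subseteq> set_pmf Q \<Longrightarrow> rel_entropy P Q = ereal (kl_sum P Q)"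
  by (simp add: rel_entropy_def kl_sum_def)

lemma pmf_map_pmf_eq_sum:
  assumes "finite (set_pmf M)"
  shows "pmf (map_pmf f M) k = (\<Sum>x | x \<in> set_pmf M \<and> f x = k. pmf M x)"
proof -
  have "pmf (map_pmf f M) k = measure M (f -` {k} \<inter> set_pmf M)"
    by (simp add: pmf_map measure_Int_set_pmf)
  also have "\<dots> = (\<Sum>x | x \<in> set_pmf M \<and> f x = k. pmf M x)"
    using assms by (subst measure_measure_pmf_finite) (auto intro: sum.cong)
  finally show ?thesis .
qed

lemma sum_pmf_le_pmf_map_pmf:
  assumes "finite F" "\<And>x. x \<in> F \<Longrightarrow> f x = k"
  shows "sum (pmf M) F \<le> pmf (map_pmf f M) k"
proof -
  have "sum (pmf M) F = measure M F"
    using assms(1) by (simp add: measure_measure_pmf_finite)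
  also have "\<dots> \<le> measure M (f -` {k})"
    using assms by (intro measure_pmf.finite_measure_mono) auto
  finally show ?thesis by (simp add: pmf_map)
qed

lemma log_sum_inequality:
  fixes a b :: "'a \<Rightarrow> real"
  assumes "finite F" "F \<noteq> {}" and pos: "\<And>t. t \<in> F \<Longrightarrow> a t > 0 \<and> b t > 0"
    and "sum b F \<le> Q"
  shows "sum a F * ln (sum a F / Q) \<le> (\<Sum>t\<in>F. a t * ln (a t / b t))"
proof -
  define S where "S = sum a F"
  have "S > 0" "sum b F > 0"
    unfolding S_def using assms by (auto intro!: sum_pos)
  hence "Q > 0" using assms(4) by linarith
  \<comment> \<open>tangent line \<open>ln x \<ge> 1 - 1/x\<close> at \<open>x = a t Q / (b t S)\<close>\<close>
  have tangent: "a t * ln (S / Q) + a t - b t * S / Q \<le> a t * ln (a t / b t)" if "t \<in> F" for t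
  proof -
    from pos[OF that] have "a t > 0" "b t > 0" by auto
    define x where "x = a t * Q / (b t * S)"
    have "x > 0" unfolding x_def using \<open>a t > 0\<close> \<open>b t > 0\<close> \<open>S > 0\<close> \<open>Q > 0\<close> by simp
    have "1 - 1 / x \<le> ln x"
      using ln_le_minus_one[of "1 / x"] \<open>x > 0\<close> by (simp add: ln_div)
    hence "a t * (1 - 1 / x) \<le> a t * ln x"
      using \<open>a t > 0\<close> by (intro mult_left_mono) auto
    moreover have "ln (a t / b t) = ln (S / Q) + ln x"
      using \<open>a t > 0\<close> \<open>b t > 0\<close> \<open>S > 0\<close> \<open>Q > 0\<close>
      by (simp add: x_def ln_div ln_mult)
    moreover have "a t * (1 - 1 / x) = a t - b t * S / Q"
      unfolding x_def using \<open>a t > 0\<close> \<open>b t > 0\<close> \<open>S > 0\<close> \<open>Q > 0\<close> by (simp add: field_simps)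
    ultimately show ?thesis by (simp add: algebra_simps)
  qed
  have "sum b F * S / Q \<le> S"
    using assms(4) \<open>S > 0\<close> \<open>Q > 0\<close> by (simp add: field_simps)
  hence "S * ln (S / Q) \<le> (\<Sum>t\<in>F. a t * ln (S / Q) + a t - b t * S / Q)"
    by (simp add: sum.distrib sum_subtractf sum_distrib_right[symmetric]
        sum_divide_distrib[symmetric] S_def)
  also have "\<dots> \<le> (\<Sum>t\<in>F. a t * ln (a t / b t))"
    using tangent by (intro sum_mono)
  finally show ?thesis unfolding S_def .
qed

lemma kl_sum_map_pmf_le:
  assumes fin: "finite (set_pmf P)" and sub: "set_pmf P \<subseteq> set_pmf Q"
  shows "kl_sum (map_pmf f P) (map_pmf f Q) \<le> kl_sum P Q"
proof -
  let ?fiber = "\<lambda>k. {x \<in> set_pmf P. f x = k}"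
  let ?g = "\<lambda>x. pmf P x * ln (pmf P x / pmf Q x)"
  have "kl_sum (map_pmf f P) (map_pmf f Q)
      = (\<Sum>k\<in>f ` set_pmf P. pmf (map_pmf f P) k * ln (pmf (map_pmf f P) k / pmf (map_pmf f Q) k))"
    by (simp add: kl_sum_def)
  also have "\<dots> \<le> (\<Sum>k\<in>f ` set_pmf P. sum ?g (?fiber k))"
  proof (intro sum_mono)
    fix k assume k: "k \<in> f ` set_pmf P"
    have "sum (pmf Q) (?fiber k) \<le> pmf (map_pmf f Q) k"
      using fin by (intro sum_pmf_le_pmf_map_pmf) auto
    moreover have "?fiber k \<noteq> {}"
      using k by auto
    moreover have "pmf P x > 0 \<and> pmf Q x > 0" if "x \<in> ?fiber k" for x
      using that sub by (auto simp: pmf_positive)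
    ultimately show "pmf (map_pmf f P) k * ln (pmf (map_pmf f P) k / pmf (map_pmf f Q) k)
        \<le> sum ?g (?fiber k)"
      unfolding pmf_map_pmf_eq_sum[OF fin] using fin by (intro log_sum_inequality) auto
  qed
  also have "\<dots> = kl_sum P Q"
    unfolding kl_sum_def using fin by (intro sum.group) auto
  finally show ?thesis .
qed

lemma kl_sum_pair_pmf:
  assumes "finite (set_pmf A)" "finite (set_pmf B)"
    and "set_pmf A \<subseteq> set_pmf C" "set_pmf B \<subseteq> set_pmf E"
  shows "kl_sum (pair_pmf A B) (pair_pmf C E) = kl_sum A C + kl_sum B E"
proof -
  let ?h = "\<lambda>i j. pmf A i * pmf B j * ln (pmf A i / pmf C i) + pmf A i * pmf B j * ln (pmf B j / pmf E j)"
  have pointwise: "pmf (pair_pmf A B) (i, j) * ln (pmf (pair_pmf A B) (i, j) / pmf (pair_pmf C E) (i, j))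
      = ?h i j" if "i \<in> set_pmf A" "j \<in> set_pmf B" for i j
  proof -
    have "pmf A i > 0" "pmf B j > 0" "pmf C i > 0" "pmf E j > 0"
      using that assms by (auto simp: pmf_positive)
    thus ?thesis by (simp add: pmf_pair ln_mult ln_div algebra_simps)
  qed
  have "kl_sum (pair_pmf A B) (pair_pmf C E) = (\<Sum>i\<in>set_pmf A. \<Sum>j\<in>set_pmf B. ?h i j)"
    unfolding kl_sum_def set_pair_pmf sum.cartesian_product using pointwise
    by (intro sum.cong) auto
  also have "\<dots> = (\<Sum>i\<in>set_pmf A. pmf A i * ln (pmf A i / pmf C i) * sum (pmf B) (set_pmf B)
                                   + pmf A i * kl_sum B E)"
    by (simp add: kl_sum_def sum.distrib sum_distrib_left sum_distrib_right algebra_simps)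
  also have "\<dots> = kl_sum A C + kl_sum B E"
    using assms by (simp add: kl_sum_def sum_pmf_eq_1 sum.distrib flip: sum_distrib_right)
  finally show ?thesis .
qed

lemma kl_sum_conv_pmf_le:
  assumes "finite (set_pmf A)" "finite (set_pmf B)"
    and "set_pmf A \<subseteq> set_pmf C" "set_pmf B \<subseteq> set_pmf E"
  shows "kl_sum (conv_pmf A B) (conv_pmf C E) \<le> kl_sum A C + kl_sum B E"
  unfolding conv_pmf_def kl_sum_pair_pmf[OF assms, symmetric]
  using assms by (intro kl_sum_map_pmf_le) auto

lemma kl_sum_le_of_pmf_lower_bound:
  assumes L: "\<And>x. x \<in> set_pmf P \<Longrightarrow> 0 < L x \<and> L x \<le> pmf Q x"
  shows "set_pmf P \<subseteq> set_pmf Q"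
    and "kl_sum P Q \<le> (\<Sum>x\<in>set_pmf P. pmf P x * ln (pmf P x / L x))"
proof -
  show "set_pmf P \<subseteq> set_pmf Q"
    using L by (force simp: set_pmf_iff)
  show "kl_sum P Q \<le> (\<Sum>x\<in>set_pmf P. pmf P x * ln (pmf P x / L x))"
    unfolding kl_sum_def
  proof (intro sum_mono mult_left_mono)
    fix x assume "x \<in> set_pmf P"
    with L[of x] show "ln (pmf P x / pmf Q x) \<le> ln (pmf P x / L x)"
      by (simp add: pmf_positive divide_left_mono)
  qed simp
qed

lemma pmf_po_pmf: "r \<ge> 0 \<Longrightarrow> pmf (po_pmf r) k = r ^ k / fact k * exp (- r)"
  by (cases "r = 0"; cases k) (auto simp: po_pmf_def)

lemma conv_pmf_po_pmf:
  assumes "r \<ge> 0" "s \<ge> 0"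
  shows "conv_pmf (po_pmf r) (po_pmf s) = po_pmf (r + s)"
proof (rule pmf_eqI)
  fix k
  have "pmf (conv_pmf (po_pmf r) (po_pmf s)) k
      = (\<Sum>i\<le>k. r ^ i / fact i * exp (- r) * (s ^ (k - i) / fact (k - i) * exp (- s)))"
    using assms by (simp add: pmf_conv_pmf_nat pmf_po_pmf)
  also have "\<dots> = (\<Sum>i\<le>k. of_nat (k choose i) * r ^ i * s ^ (k - i)) / fact k * exp (- (r + s))"
    unfolding sum_divide_distrib sum_distrib_right
  proof (intro sum.cong refl)
    fix i assume "i \<in> {..k}"
    hence "real (k choose i) = fact k / (fact i * fact (k - i))"
      by (simp add: binomial_fact)
    thus "r ^ i / fact i * exp (- r) * (s ^ (k - i) / fact (k - i) * exp (- s)) =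
          real (k choose i) * r ^ i * s ^ (k - i) / fact k * exp (- (r + s))"
      by (simp add: field_simps exp_add[symmetric])
  qed
  also have "\<dots> = pmf (po_pmf (r + s)) k"
    using assms by (simp add: pmf_po_pmf binomial_ring)
  finally show "pmf (conv_pmf (po_pmf r) (po_pmf s)) k = pmf (po_pmf (r + s)) k" .
qed

lemma cpo_pmf_eq_conv_pmf: "cpo_pmf a b = conv_pmf (po_pmf a) (map_pmf (\<lambda>z. 2 * z) (po_pmf b))"
  by (simp add: cpo_pmf_def conv_pmf_def pair_map_pmf2 map_pmf_comp case_prod_unfold map_prod_def)

lemma conv_pmf_cpo_pmf:
  assumes "a \<ge> 0" "b \<ge> 0" "c \<ge> 0" "d \<ge> 0"
  shows "conv_pmf (cpo_pmf a b) (cpo_pmf c d) = cpo_pmf (a + c) (b + d)"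
  using assms
  by (simp add: cpo_pmf_eq_conv_pmf conv_pmf_conv_pmf_swap conv_pmf_map_pmf_additive
      distrib_left conv_pmf_po_pmf)

lemma pmf_cpo_pmf_ge: "pmf (po_pmf a) i * pmf (po_pmf b) j \<le> pmf (cpo_pmf a b) (i + 2 * j)"
  unfolding cpo_pmf_def
  using sum_pmf_le_pmf_map_pmf[of "{(i, j)}" "\<lambda>(z1, z2). z1 + 2 * z2" "i + 2 * j"
      "pair_pmf (po_pmf a) (po_pmf b)"] by (simp add: pmf_pair)

definition Y_pmf :: "real \<Rightarrow> nat pmf" where
  "Y_pmf q = map_pmf (\<lambda>(x, a). a * (if x then 1 else 0)) (pair_pmf (bernoulli_pmf q) (pmf_of_set {1, 2}))"

lemma Y_pmf_bind:
  "Y_pmf q = bind_pmf (bernoulli_pmf q)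
     (\<lambda>x. bind_pmf (pmf_of_set {1, 2}) (\<lambda>a. return_pmf (a * (if x then 1 else 0))))"
  by (simp add: Y_pmf_def pair_pmf_def map_pmf_def bind_assoc_pmf bind_return_pmf)

lemma pmf_Y_pmf:
  assumes "0 \<le> q" "q \<le> 1"
  shows "pmf (Y_pmf q) k = (if k = 0 then 1 - q else if k = 1 \<or> k = 2 then q / 2 else 0)"
proof -
  have "Y_pmf q = bind_pmf (bernoulli_pmf q) (\<lambda>x. if x then pmf_of_set {1, 2} else return_pmf 0)"
    unfolding Y_pmf_bind by (intro bind_pmf_cong refl) (auto simp: bind_return_pmf' bind_pmf_const)
  thus ?thesis using assms by (auto simp: pmf_bind indicator_def)
qed

lemma set_Y_pmf: "set_pmf (Y_pmf q) \<subseteq> {0, 1, 2}"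
  by (auto simp: Y_pmf_def split: if_splits)

lemma finite_set_Y_pmf: "finite (set_pmf (Y_pmf q))"
  using set_Y_pmf by (rule finite_subset) simp

lemma kl_sum_Y_pmf_cpo_pmf:
  assumes "0 \<le> q" "q \<le> 1"
  shows "set_pmf (Y_pmf q) \<subseteq> set_pmf (cpo_pmf (q / 2) (q / 2))"
    and "kl_sum (Y_pmf q) (cpo_pmf (q / 2) (q / 2)) \<le> q\<^sup>2"
proof -
  let ?Y = "pmf (Y_pmf q)"
  define L where "L k = (if k = 0 then exp (- q) else q / 2 * exp (- q))" for k :: nat
  have "exp (- (q / 2)) * exp (- (q / 2)) = exp (- q)"
    by (simp flip: exp_add)
  hence "L k \<le> pmf (cpo_pmf (q / 2) (q / 2)) k" if "k \<in> {0, 1, 2}" for k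
    using that assms pmf_cpo_pmf_ge[of "q / 2" 0 "q / 2" 0] pmf_cpo_pmf_ge[of "q / 2" 1 "q / 2" 0]
      pmf_cpo_pmf_ge[of "q / 2" 0 "q / 2" 1]
    by (auto simp: L_def pmf_po_pmf mult_ac numeral_2_eq_2)
  moreover have "0 < L k" if "k \<in> set_pmf (Y_pmf q)" for k
    using that assms by (auto simp: L_def set_pmf_iff pmf_Y_pmf split: if_splits)
  ultimately have L: "0 < L k \<and> L k \<le> pmf (cpo_pmf (q / 2) (q / 2)) k"
    if "k \<in> set_pmf (Y_pmf q)" for k
    using that set_Y_pmf by blast
  show "set_pmf (Y_pmf q) \<subseteq> set_pmf (cpo_pmf (q / 2) (q / 2))"
    using kl_sum_le_of_pmf_lower_bound(1) L by blast
  have "kl_sum (Y_pmf q) (cpo_pmf (q / 2) (q / 2)) \<le> (\<Sum>k\<in>set_pmf (Y_pmf q). ?Y k * ln (?Y k / L k))"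
    using kl_sum_le_of_pmf_lower_bound(2) L by blast
  also have "\<dots> = (\<Sum>k\<in>{0, 1, 2}. ?Y k * ln (?Y k / L k))"
    using set_Y_pmf by (intro sum.mono_neutral_left) (auto simp: set_pmf_iff)
  also have "\<dots> = (1 - q) * ln ((1 - q) / exp (- q)) + q * ln ((q / 2) / (q / 2 * exp (- q)))"
    using assms by (simp add: pmf_Y_pmf L_def)
  also have "\<dots> \<le> q\<^sup>2"
  proof -
    have "(1 - q) / exp (- q) \<le> 1"
      using exp_ge_add_one_self[of "- q"] by simp
    hence "(1 - q) * ln ((1 - q) / exp (- q)) \<le> 0"
      using assms by (cases "q = 1") (auto intro!: mult_nonneg_nonpos)
    moreover have "q * ln ((q / 2) / (q / 2 * exp (- q))) = q\<^sup>2"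
      by (cases "q = 0") (simp_all add: exp_minus power2_eq_square field_simps)
    ultimately show ?thesis by linarith
  qed
  finally show "kl_sum (Y_pmf q) (cpo_pmf (q / 2) (q / 2)) \<le> q\<^sup>2" .
qed

lemma S_pmf_0: "S_pmf 0 p = return_pmf 0"
  by (simp add: S_pmf_def)

lemma S_pmf_Suc: "S_pmf (Suc n) p = conv_pmf (S_pmf n p) (Y_pmf (p n))"
proof -
  have S_pmf_bind: "S_pmf m p = bind_pmf (Pi_pmf {..<m} False (\<lambda>i. bernoulli_pmf (p i)))
     (\<lambda>X. bind_pmf (Pi_pmf {..<m} 1 (\<lambda>i. pmf_of_set {1, 2}))
       (\<lambda>\<alpha>. return_pmf (\<Sum>i<m. \<alpha> i * (if X i then 1 else 0))))" for m
    by (simp add: S_pmf_def pair_pmf_def map_pmf_def bind_assoc_pmf bind_return_pmf)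
  have sum_upd: "(\<Sum>i<Suc n. (\<alpha>(n := a)) i * (if (X(n := x)) i then 1 else 0)) =
     (\<Sum>i<n. \<alpha> i * (if X i then 1 else 0)) + a * (if x then 1 else 0)"
    for \<alpha> :: "nat \<Rightarrow> nat" and X a x
  proof -
    have "(\<Sum>i<n. (\<alpha>(n := a)) i * (if (X(n := x)) i then 1 else 0))
        = (\<Sum>i<n. \<alpha> i * (if X i then 1 else 0))"
      by (intro sum.cong) auto
    thus ?thesis by simp
  qed
  have "{..<Suc n} = insert n {..<n}" by auto
  then show ?thesis
    unfolding S_pmf_bind conv_pmf_bind Y_pmf_bind
    by (simp add: Pi_pmf_insert' bind_assoc_pmf bind_return_pmf sum_upd
        bind_commute_pmf[of "pmf_of_set _" "Pi_pmf _ _ _"]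
        bind_commute_pmf[of "bernoulli_pmf _" "Pi_pmf _ _ _"] add_ac)
qed

lemma finite_set_S_pmf: "finite (set_pmf (S_pmf n p))"
proof (induction n)
  case (Suc n)
  then show ?case by (simp add: S_pmf_Suc set_conv_pmf finite_set_Y_pmf)
qed (simp add: S_pmf_0)

lemma kl_sum_S_pmf_cpo_pmf:
  assumes "\<And>i. i < n \<Longrightarrow> 0 \<le> p i \<and> p i \<le> 1"
  defines "lam \<equiv> \<Sum>i<n. p i"
  shows "set_pmf (S_pmf n p) \<subseteq> set_pmf (cpo_pmf (lam / 2) (lam / 2))
    \<and> kl_sum (S_pmf n p) (cpo_pmf (lam / 2) (lam / 2)) \<le> (\<Sum>i<n. (p i)\<^sup>2)"
  using assms(1) unfolding lam_def
proof (induction n)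
  case 0
  show ?case by (simp add: S_pmf_0 cpo_pmf_def po_pmf_def kl_sum_def)
next
  case (Suc n)
  let ?l = "\<Sum>i<n. p i"
  have IH: "set_pmf (S_pmf n p) \<subseteq> set_pmf (cpo_pmf (?l / 2) (?l / 2))"
    "kl_sum (S_pmf n p) (cpo_pmf (?l / 2) (?l / 2)) \<le> (\<Sum>i<n. (p i)\<^sup>2)"
    using Suc by auto
  have pn: "0 \<le> p n" "p n \<le> 1" using Suc.prems by auto
  have "0 \<le> ?l" using Suc.prems by (intro sum_nonneg) auto
  hence cpo_Suc: "cpo_pmf ((\<Sum>i<Suc n. p i) / 2) ((\<Sum>i<Suc n. p i) / 2)
      = conv_pmf (cpo_pmf (?l / 2) (?l / 2)) (cpo_pmf (p n / 2) (p n / 2))"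
    using pn by (simp add: conv_pmf_cpo_pmf add_divide_distrib)
  show ?case
    unfolding S_pmf_Suc cpo_Suc
    using kl_sum_conv_pmf_le[OF finite_set_S_pmf finite_set_Y_pmf IH(1) kl_sum_Y_pmf_cpo_pmf(1)[OF pn]]
      IH kl_sum_Y_pmf_cpo_pmf[OF pn]
    by (auto simp: set_conv_pmf)
qed

theorem mainTheorem14:
  fixes n :: nat and p :: "nat \<Rightarrow> real"
  assumes "\<And>i. i < n \<Longrightarrow> 0 \<le> p i \<and> p i \<le> 1"
  defines "lam \<equiv> (\<Sum>i<n. p i)"
  shows "rel_entropy (S_pmf n p) (cpo_pmf (lam / 2) (lam / 2)) \<le> ereal (\<Sum>i<n. (p i)\<^sup>2)"
  using kl_sum_S_pmf_cpo_pmf[OF assms(1)] finite_set_S_pmf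
  by (simp add: lam_def rel_entropy_eq_kl_sum)

end
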